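(* Let $h$ be a positive integer, $\alpha=\dfrac{h+\sqrt{h^2+4}}{2}$, and define $q_{-1}=0$, $q_0=1$, $q_{k+1}=hq_k+q_{k-1}$ for $k\ge0$. Then for integers $n\ge1$: $$\lceil\alpha n\rceil-\alpha n=\begin{cases} j/\alpha^{2k} & \text{if } n=jq_{2k-1},\ k\ge1,\ 1\le j<\alpha^{2k},\\ (\alpha-1)/\alpha^{2k+1} & \text{if } n=q_{2k-1}+q_{2k},\ k\ge0,\\ (\alpha+1)/\alpha^{2k+2} & \text{if } n=q_{2k+1}-q_{2k},\ k\ge0,\end{cases}$$ and $n(\lceil\alpha n\rceil-\alpha n)\ge1$ for all other integers $n\ge1$ (i.e. all $n\ge1$ not of any of these three forms).
   Context: The numbers $q_k$ are the denominators of the convergents of the regular continued fraction $\alpha=[h;h,h,\dots]$. *)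

theory Defs
  imports Complex_Main
begin

text \<open>Shifted denominators: Qs h m = q_{m-1}, so Qs h 0 = q_{-1} = 0, Qs h 1 = q_0 = 1,
  q_{k+1} = h q_k + q_{k-1}.\<close>
fun Qs :: "nat \<Rightarrow> nat \<Rightarrow> nat" where
  "Qs h 0 = 0"
| "Qs h (Suc 0) = 1"
| "Qs h (Suc (Suc m)) = h * Qs h (Suc m) + Qs h m"

definition q :: "nat \<Rightarrow> int \<Rightarrow> nat" where
  "q h k = Qs h (nat (k + 1))"

definition alpha :: "nat \<Rightarrow> real" where
  "alpha h = (real h + sqrt (real h ^ 2 + 4)) / 2"

end

theory Submission
  imports Defs
begin

text \<open>
  Let \<open>\<alpha> = alpha h\<close> and \<open>\<beta> = -1/\<alpha>\<close> be the roots of \<open>x\<^sup>2 = h x + 1\<close>. The convergents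
  satisfy \<open>q\<^sub>i - \<alpha> q\<^sub>i\<^sub>-\<^sub>1 = \<beta>\<^sup>i\<close>, and each of the three families consists of integer
  combinations of two consecutive convergents whose error lies in \<open>[0, 1)\<close>; that error is
  then the gap \<open>\<lceil>\<alpha> n\<rceil> - \<alpha> n\<close>. Conversely, let \<open>n\<close> have gap \<open>x\<close> with \<open>n x < 1\<close> and put
  \<open>m = \<lceil>\<alpha> n\<rceil>\<close>. If \<open>(h\<^sup>2 + 1) n - h m \<le> 0\<close>, then \<open>n \<in> {1, h - 1}\<close> or \<open>n = j h\<close>, the first
  members of the families. Otherwise the unimodular map \<open>(m, n) \<mapsto> (m - h n, (h\<^sup>2 + 1) n - h m)\<close>
  yields a smaller \<open>n' \<ge> 1\<close> with gap \<open>\<alpha>\<^sup>2 x\<close> and \<open>n' \<alpha>\<^sup>2 x \<le> n x\<close>; its inverse maps each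
  family into itself, shifting the convergent index by two, so induction on \<open>n\<close> applies.
\<close>

definition gap :: "nat \<Rightarrow> nat \<Rightarrow> real" where
  "gap h n = of_int \<lceil>alpha h * real n\<rceil> - alpha h * real n"

definition special :: "nat \<Rightarrow> nat \<Rightarrow> bool" where
  "special h n \<longleftrightarrow>
     (\<exists>k j. 1 \<le> k \<and> 1 \<le> j \<and> real j < alpha h ^ (2*k) \<and> n = j * Qs h (2*k))
   \<or> (\<exists>k. n = Qs h (2*k) + Qs h (2*k+1))
   \<or> (\<exists>k. int n = int (Qs h (2*k+2)) - int (Qs h (2*k+1)))"

lemma q_eq_Qs: "q h (int i - 1) = Qs h i"
  by (simp add: q_def)

lemma Qs_Suc_Suc: "Qs h (i + 2) = h * Qs h (i + 1) + Qs h i"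
  by (simp add: numeral_2_eq_2)

lemma alpha_ge_half_sum: "alpha h \<ge> (real h + 2) / 2"
proof -
  have "sqrt (real h ^ 2 + 4) \<ge> sqrt 4" by (rule real_sqrt_le_mono) simp
  then show ?thesis unfolding alpha_def by simp
qed

lemma one_le_alpha: "1 \<le> alpha h"
  using alpha_ge_half_sum[of h] by simp

lemma one_less_alpha: "1 \<le> h \<Longrightarrow> 1 < alpha h"
  using alpha_ge_half_sum[of h] by simp

lemma alpha_squared: "alpha h ^ 2 = real h * alpha h + 1"
proof -
  have "sqrt (real h ^ 2 + 4) ^ 2 = real h ^ 2 + 4" by simp
  then show ?thesis unfolding alpha_def by (simp add: power2_eq_square field_simps)
qed

lemma alpha_minus_h: "alpha h - real h = 1 / alpha h"
proof -
  have "alpha h * (alpha h - real h) = 1"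
    using alpha_squared[of h] by (simp add: power2_eq_square algebra_simps)
  then show ?thesis using one_le_alpha[of h] by (simp add: eq_divide_eq mult.commute)
qed

lemma conjugate_root: "(- 1 / alpha h) ^ 2 = real h * (- 1 / alpha h) + 1"
proof -
  have "real h * (- 1 / alpha h) + 1 = (alpha h - real h) / alpha h"
    using one_le_alpha[of h] by (simp add: field_simps)
  also have "\<dots> = (- 1 / alpha h) ^ 2"
    by (simp add: alpha_minus_h power2_eq_square)
  finally show ?thesis ..
qed

lemma Qs_error: "real (Qs h (Suc i)) - alpha h * real (Qs h i) = (- 1 / alpha h) ^ i"
proof (induction h i rule: Qs.induct)
  case (3 h m)
  let ?\<beta> = "- 1 / alpha h"
  have "real (Qs h (Suc (Suc (Suc m)))) - alpha h * real (Qs h (Suc (Suc m)))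
      = real h * (real (Qs h (Suc (Suc m))) - alpha h * real (Qs h (Suc m)))
        + (real (Qs h (Suc m)) - alpha h * real (Qs h m))"
    by (simp add: algebra_simps)
  also have "\<dots> = real h * ?\<beta> ^ Suc m + ?\<beta> ^ m"
    by (simp only: "3.IH")
  also have "\<dots> = ?\<beta> ^ m * (real h * ?\<beta> + 1)"
    by (simp add: algebra_simps)
  also have "\<dots> = ?\<beta> ^ Suc (Suc m)"
    unfolding conjugate_root[symmetric] by (simp add: power2_eq_square)
  finally show ?case .
qed (simp_all add: alpha_minus_h[symmetric])

lemma Qs_error_even: "real (Qs h (2*k+1)) - alpha h * real (Qs h (2*k)) = 1 / alpha h ^ (2*k)"
  using Qs_error[of h "2*k"] by (simp add: power_mult power_divide)

lemma Qs_error_odd: "real (Qs h (2*k+2)) - alpha h * real (Qs h (2*k+1)) = - 1 / alpha h ^ (2*k+1)"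
  using Qs_error[of h "2*k+1"] by (simp add: power_mult power_divide)

lemma ceiling_eqI:
  fixes x e :: real
  assumes "of_int m - x = e" "0 \<le> e" "e < 1"
  shows "\<lceil>x\<rceil> = m" "of_int \<lceil>x\<rceil> - x = e"
proof -
  show "\<lceil>x\<rceil> = m" using assms by (intro ceiling_unique) auto
  then show "of_int \<lceil>x\<rceil> - x = e" using assms(1) by simp
qed

lemma gap_multiple:
  assumes "real j < alpha h ^ (2*k)" and n: "n = j * Qs h (2*k)"
  shows "\<lceil>alpha h * real n\<rceil> = int (j * Qs h (2*k+1))"
    and "gap h n = real j / alpha h ^ (2*k)"
proof -
  have err: "of_int (int (j * Qs h (2*k+1))) - alpha h * real n = real j / alpha h ^ (2*k)"
    using Qs_error_even[of h k] unfolding n by (simp add: algebra_simps)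
  have "real j / alpha h ^ (2*k) < 1"
    using assms(1) one_le_alpha[of h] by simp
  from ceiling_eqI[OF err _ this]
  show "\<lceil>alpha h * real n\<rceil> = int (j * Qs h (2*k+1))"
    and "gap h n = real j / alpha h ^ (2*k)"
    unfolding gap_def by simp_all
qed

lemma gap_sum:
  assumes n: "n = Qs h (2*k) + Qs h (2*k+1)"
  shows "\<lceil>alpha h * real n\<rceil> = int (Qs h (2*k+1) + Qs h (2*k+2))"
    and "gap h n = (alpha h - 1) / alpha h ^ (2*k+1)"
proof -
  have A: "1 \<le> alpha h" by (rule one_le_alpha)
  have "real (Qs h (2*k+1) + Qs h (2*k+2)) - alpha h * real n
      = 1 / alpha h ^ (2*k) - 1 / alpha h ^ (2*k+1)"
    using Qs_error_even[of h k] Qs_error_odd[of h k] unfolding n by (simp add: algebra_simps)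
  also have "\<dots> = (alpha h - 1) / alpha h ^ (2*k+1)"
    using A by (simp add: field_simps)
  finally have err: "of_int (int (Qs h (2*k+1) + Qs h (2*k+2))) - alpha h * real n
      = (alpha h - 1) / alpha h ^ (2*k+1)" by simp
  have "alpha h \<le> alpha h ^ (2*k+1)"
    using A power_increasing[of 1 "2*k+1" "alpha h"] by simp
  then have "alpha h - 1 < 1 * alpha h ^ (2*k+1)" by simp
  moreover have "0 < alpha h ^ (2*k+1)" using A by simp
  ultimately have "(alpha h - 1) / alpha h ^ (2*k+1) < 1"
    by (simp only: pos_divide_less_eq)
  from ceiling_eqI[OF err _ this] A
  show "\<lceil>alpha h * real n\<rceil> = int (Qs h (2*k+1) + Qs h (2*k+2))"
    and "gap h n = (alpha h - 1) / alpha h ^ (2*k+1)"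
    unfolding gap_def by simp_all
qed

text \<open>For \<open>h = 1\<close>, \<open>k = 0\<close> the difference is \<open>0\<close>, which the hypothesis \<open>1 \<le> n\<close> excludes.\<close>
lemma gap_difference:
  assumes h: "1 \<le> h" and "1 \<le> n" and n: "int n = int (Qs h (2*k+2)) - int (Qs h (2*k+1))"
  shows "\<lceil>alpha h * real n\<rceil> = int (Qs h (2*k+3)) - int (Qs h (2*k+2))"
    and "gap h n = (alpha h + 1) / alpha h ^ (2*k+2)"
proof -
  have A: "1 < alpha h" using one_less_alpha[OF h] .
  have rn: "real n = real (Qs h (2*k+2)) - real (Qs h (2*k+1))"
    using n by (metis of_int_of_nat_eq of_int_diff)
  have "real (Qs h (2*k+3)) - alpha h * real (Qs h (2*k+2)) = 1 / alpha h ^ (2*k+2)"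
    using Qs_error_even[of h "k+1"] by (simp add: numeral_3_eq_3 numeral_2_eq_2)
  then have "real (Qs h (2*k+3)) - real (Qs h (2*k+2)) - alpha h * real n
      = 1 / alpha h ^ (2*k+2) + 1 / alpha h ^ (2*k+1)"
    using Qs_error_odd[of h k] unfolding rn by (simp add: algebra_simps)
  also have "\<dots> = (alpha h + 1) / alpha h ^ (2*k+2)"
    using A by (simp add: field_simps)
  finally have err: "real_of_int (int (Qs h (2*k+3)) - int (Qs h (2*k+2))) - alpha h * real n
      = (alpha h + 1) / alpha h ^ (2*k+2)" by simp
  have "alpha h + 1 < alpha h ^ (2*k+2)"
  proof (cases k)
    case 0
    with n \<open>1 \<le> n\<close> have "2 \<le> h" by (simp add: numeral_2_eq_2)
    then have "2 * alpha h \<le> real h * alpha h" using A by (intro mult_right_mono) auto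
    then show ?thesis using 0 A alpha_squared[of h] by (simp add: power2_eq_square)
  next
    case (Suc k')
    have "alpha h \<le> real h * alpha h" using A h by simp
    then have "alpha h + 1 \<le> alpha h ^ 2" using alpha_squared[of h] by simp
    also have "\<dots> < alpha h ^ (2*k+2)" using Suc A by (intro power_strict_increasing) auto
    finally show ?thesis .
  qed
  then have "(alpha h + 1) / alpha h ^ (2*k+2) < 1" using A by (simp add: divide_less_eq)
  from ceiling_eqI[OF err _ this] A
  show "\<lceil>alpha h * real n\<rceil> = int (Qs h (2*k+3)) - int (Qs h (2*k+2))"
    and "gap h n = (alpha h + 1) / alpha h ^ (2*k+2)"
    unfolding gap_def by simp_all
qed

lemma special_step:
  assumes h: "1 \<le> h" and "special h n'" "1 \<le> n'"
    and n: "int n = int h * \<lceil>alpha h * real n'\<rceil> + int n'"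
  shows "special h n"
proof -
  from \<open>special h n'\<close> consider
      (multiple) k j where "1 \<le> k" "1 \<le> j" "real j < alpha h ^ (2*k)" "n' = j * Qs h (2*k)"
    | (sum) k where "n' = Qs h (2*k) + Qs h (2*k+1)"
    | (difference) k where "int n' = int (Qs h (2*k+2)) - int (Qs h (2*k+1))"
    unfolding special_def by blast
  then show ?thesis
  proof cases
    case multiple
    have "int n = int (j * Qs h (2*(k+1)))"
      using n gap_multiple(1)[OF multiple(3,4)] Qs_Suc_Suc[of h "2*k"] multiple(4)
      by (simp add: algebra_simps)
    moreover have "alpha h ^ (2*k) \<le> alpha h ^ (2*(k+1))"
      using one_le_alpha by (intro power_increasing) auto
    ultimately show ?thesis
      unfolding special_def using multiple by (metis le_add2 less_le_trans of_nat_eq_iff)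
  next
    case sum
    have "int n = int (Qs h (2*(k+1)) + Qs h (2*(k+1)+1))"
      using n gap_sum(1)[OF sum] Qs_Suc_Suc[of h "2*k"] Qs_Suc_Suc[of h "2*k+1"] sum
      by (simp add: algebra_simps)
    then show ?thesis unfolding special_def by (metis of_nat_eq_iff)
  next
    case difference
    have r3: "Qs h (2*k+3) = h * Qs h (2*k+2) + Qs h (2*k+1)"
      and r4: "Qs h (2*k+4) = h * Qs h (2*k+3) + Qs h (2*k+2)"
      by (simp_all add: eval_nat_numeral)
    have "int n = int (Qs h (2*k+4)) - int (Qs h (2*k+3))"
      using n gap_difference(1)[OF h \<open>1 \<le> n'\<close> difference] difference
      unfolding r4 r3 by (simp add: algebra_simps)
    moreover have "2*(k+1)+2 = 2*k+4" "2*(k+1)+1 = 2*k+3" by simp_all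
    ultimately show ?thesis unfolding special_def by metis
  qed
qed

lemma gap_nonneg: "0 \<le> gap h n"
  unfolding gap_def by linarith

lemma gap_reduction_identity:
  "real_of_int (int h * \<lceil>alpha h * real n\<rceil> - (int h ^ 2 + 1) * int n)
     = real h * gap h n - real n / alpha h ^ 2"
proof -
  have A: "0 < alpha h" using one_le_alpha[of h] by simp
  have "real h * alpha h - real h ^ 2 - 1 = real h * (alpha h - real h) - 1"
    by (simp add: algebra_simps power2_eq_square)
  also have "\<dots> = (real h - alpha h) / alpha h"
    using A by (simp add: alpha_minus_h field_simps)
  also have "\<dots> = - (alpha h - real h) / alpha h"
    by simp
  also have "\<dots> = - 1 / alpha h ^ 2"
    by (simp add: alpha_minus_h power2_eq_square)
  finally have key: "real h * alpha h - real h ^ 2 - 1 = - 1 / alpha h ^ 2" .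
  have "real_of_int (int h * \<lceil>alpha h * real n\<rceil> - (int h ^ 2 + 1) * int n)
      = real h * gap h n + real n * (real h * alpha h - real h ^ 2 - 1)"
    unfolding gap_def by (simp add: algebra_simps)
  then show ?thesis unfolding key by simp
qed

lemma small_remainder_cases:
  fixes h n r s :: int
  assumes "1 \<le> n" "0 < r" "r * n < h" "n + r = h * s"
  shows "n = 1 \<or> n = h - 1"
proof -
  have "r \<le> r * n" "n \<le> r * n" using assms(1,2) by simp_all
  then have "h * s < 2 * h" using assms(3,4) by linarith
  moreover have "0 < h * s" "0 < h" using assms \<open>r \<le> r * n\<close> by linarith+
  ultimately have "s = 1" by (simp add: zero_less_mult_iff)
  then have r: "r = h - n" using assms(4) by simp
  have "(h - n - 1) * (n - 1) = r * n - h + 1" unfolding r by (simp add: algebra_simps)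
  then have "(h - n - 1) * (n - 1) \<le> 0" using assms(3) by linarith
  moreover have "0 \<le> h - n - 1" "0 \<le> n - 1" using assms(1,2) r by linarith+
  ultimately have "(h - n - 1) * (n - 1) = 0" by (meson antisym mult_nonneg_nonneg)
  then show ?thesis by auto
qed

lemma special_if_small_gap_base:
  assumes h: "1 \<le> h" and n: "1 \<le> n" and small: "real n * gap h n < 1"
    and ge: "real n / alpha h ^ 2 \<le> real h * gap h n"
  shows "special h n"
proof -
  define r where "r = int h * \<lceil>alpha h * real n\<rceil> - (int h ^ 2 + 1) * int n"
  define s where "s = \<lceil>alpha h * real n\<rceil> - int h * int n"
  have r_real: "real_of_int r = real h * gap h n - real n / alpha h ^ 2"
    unfolding r_def by (rule gap_reduction_identity)
  have ns: "int n + r = int h * s" unfolding r_def s_def by (simp add: algebra_simps power2_eq_square)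
  have "real_of_int (r * int n) = (real h * gap h n - real n / alpha h ^ 2) * real n"
    using r_real by simp
  also have "\<dots> \<le> real h * gap h n * real n"
    by (intro mult_right_mono) auto
  also have "\<dots> < real h"
    using small h by (simp add: mult.commute mult.left_commute)
  finally have rn: "r * int n < int h" by linarith
  show ?thesis
  proof (cases "r = 0")
    case True
    with ns n have "0 < int h * s" by simp
    then have "0 < s" using h by (simp add: zero_less_mult_iff)
    define j where "j = nat s"
    have j: "s = int j" "1 \<le> j" using \<open>0 < s\<close> unfolding j_def by simp_all
    have "int n = int (j * h)" using ns True j by simp
    then have nj: "n = j * h" by (simp only: of_nat_eq_iff)
    have "real h * gap h n = real h * (real j / alpha h ^ 2)"
      using True r_real nj by simp
    then have "gap h n = real j / alpha h ^ 2" using h by (subst (asm) mult_cancel_left) simp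
    then have "real h * real j * real j / alpha h ^ 2 < 1"
      using small nj by (simp add: ac_simps)
    then have "real h * real j * real j < alpha h ^ 2"
      using one_le_alpha[of h] by simp
    moreover have "1 * real j * 1 \<le> real h * real j * real j" using h j by (intro mult_mono) auto
    ultimately have "real j < alpha h ^ (2*1)" by simp
    moreover have "n = j * Qs h (2*1)" using nj by (simp add: numeral_2_eq_2)
    ultimately show ?thesis using j unfolding special_def by blast
  next
    case False
    then have "0 < r" using r_real ge by linarith
    from small_remainder_cases[OF _ this rn ns] n
    consider "n = 1" | "int n = int h - 1" by linarith
    then show ?thesis
    proof cases
      case 1
      then have "n = Qs h (2*0) + Qs h (2*0+1)" by simp
      then show ?thesis unfolding special_def by blast
    next
      case 2
      then have "int n = int (Qs h (2*0+2)) - int (Qs h (2*0+1))" by (simp add: numeral_2_eq_2)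
      then show ?thesis unfolding special_def by blast
    qed
  qed
qed

lemma gap_reduction:
  assumes h: "1 \<le> h" and n: "1 \<le> n" and small: "real n * gap h n < 1"
    and lt: "real h * gap h n < real n / alpha h ^ 2"
  obtains n' where "1 \<le> n'" "n' < n" "real n' * gap h n' < 1"
    "int n = int h * \<lceil>alpha h * real n'\<rceil> + int n'"
proof -
  define A where "A = alpha h"
  define x where "x = gap h n"
  define r where "r = int h * \<lceil>A * real n\<rceil> - (int h ^ 2 + 1) * int n"
  define n' where "n' = nat (- r)"
  define m' where "m' = \<lceil>A * real n\<rceil> - int h * int n"
  have A: "1 < A" using one_less_alpha[OF h] unfolding A_def .
  have x: "0 \<le> x" unfolding x_def by (rule gap_nonneg)
  have r_real: "real_of_int r = real h * x - real n / A ^ 2"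
    unfolding r_def x_def A_def by (rule gap_reduction_identity)
  then have "r < 0" using lt unfolding x_def A_def by linarith
  then have n'_int: "int n' = - r" and n'_real: "real n' = real n / A ^ 2 - real h * x"
    using r_real unfolding n'_def by simp_all
  have "1 \<le> n'" using \<open>r < 0\<close> unfolding n'_def by simp
  have n_eq: "int n = int h * m' + int n'"
    unfolding n'_int r_def m'_def by (simp add: algebra_simps power2_eq_square)
  have "of_int m' - A * real n' = x * (1 + real h * A) + real n * (A - real h - 1 / A)"
    unfolding m'_def n'_real x_def gap_def A_def using A[unfolded A_def]
    by (simp add: field_simps power2_eq_square)
  also have "\<dots> = A ^ 2 * x"
    using alpha_squared[of h] alpha_minus_h[of h] unfolding A_def by simp
  finally have x'_eq: "of_int m' - A * real n' = A ^ 2 * x" .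
  have "real n' \<le> real n / A ^ 2" using n'_real x by simp
  also have "\<dots> < real n" using A n by (simp add: divide_less_eq one_less_power)
  finally have "n' < n" by simp
  have "real n' * (A ^ 2 * x) = real n * x - real h * (A * x) ^ 2"
    unfolding n'_real using A by (simp add: field_simps power2_eq_square)
  also have "\<dots> \<le> real n * x" by simp
  finally have small': "real n' * (A ^ 2 * x) < 1" using small unfolding x_def by linarith
  have "A ^ 2 * x \<le> real n' * (A ^ 2 * x)"
    using \<open>1 \<le> n'\<close> x mult_right_mono[of 1 "real n'" "A ^ 2 * x"] by simp
  with small' have "A ^ 2 * x < 1" by linarith
  from ceiling_eqI[OF x'_eq _ this] x
  have ceil': "\<lceil>alpha h * real n'\<rceil> = m'" and gap': "gap h n' = A ^ 2 * x"
    unfolding gap_def A_def by simp_all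
  show ?thesis
  proof (rule that)
    show "real n' * gap h n' < 1" using small' gap' by simp
    show "int n = int h * \<lceil>alpha h * real n'\<rceil> + int n'" using n_eq ceil' by simp
  qed fact+
qed

lemma special_if_small_gap:
  assumes h: "1 \<le> h"
  shows "1 \<le> n \<Longrightarrow> real n * gap h n < 1 \<Longrightarrow> special h n"
proof (induction n rule: less_induct)
  case (less n)
  show ?case
  proof (cases "real n / alpha h ^ 2 \<le> real h * gap h n")
    case True
    with h less.prems show ?thesis by (rule special_if_small_gap_base)
  next
    case False
    then have "real h * gap h n < real n / alpha h ^ 2" by simp
    with h less.prems obtain n' where n': "1 \<le> n'" "n' < n" "real n' * gap h n' < 1"
      and n_eq: "int n = int h * \<lceil>alpha h * real n'\<rceil> + int n'"
      by (rule gap_reduction)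
    from less.IH[OF n'(2,1,3)] have "special h n'" .
    from special_step[OF h this n'(1) n_eq] show ?thesis .
  qed
qed

theorem lemma4:
  fixes h n :: nat
  assumes "h \<ge> 1" and "n \<ge> 1"
  defines "d \<equiv> real_of_int \<lceil>alpha h * real n\<rceil> - alpha h * real n"
  shows "(\<forall>k j::nat. k \<ge> 1 \<and> 1 \<le> j \<and> real j < alpha h ^ (2*k)
            \<and> n = j * q h (2 * int k - 1) \<longrightarrow> d = real j / alpha h ^ (2*k))
       \<and> (\<forall>k::nat. n = q h (2 * int k - 1) + q h (2 * int k)
            \<longrightarrow> d = (alpha h - 1) / alpha h ^ (2*k+1))
       \<and> (\<forall>k::nat. int n = int (q h (2 * int k + 1)) - int (q h (2 * int k))
            \<longrightarrow> d = (alpha h + 1) / alpha h ^ (2*k+2))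
       \<and> ((\<not> (\<exists>k j::nat. k \<ge> 1 \<and> 1 \<le> j \<and> real j < alpha h ^ (2*k)
               \<and> n = j * q h (2 * int k - 1))
           \<and> \<not> (\<exists>k::nat. n = q h (2 * int k - 1) + q h (2 * int k))
           \<and> \<not> (\<exists>k::nat. int n = int (q h (2 * int k + 1)) - int (q h (2 * int k))))
          \<longrightarrow> real n * d \<ge> 1)"
proof -
  have d: "d = gap h n" unfolding d_def gap_def ..
  have q: "q h (2 * int k - 1) = Qs h (2*k)" "q h (2 * int k) = Qs h (2*k+1)"
    "q h (2 * int k + 1) = Qs h (2*k+2)" for k
    using q_eq_Qs[of h "2*k"] q_eq_Qs[of h "2*k+1"] q_eq_Qs[of h "2*k+2"] by (simp_all add: ac_simps)
  have "\<not> special h n \<Longrightarrow> real n * gap h n \<ge> 1"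
    using special_if_small_gap[OF assms(1,2)] by fastforce
  then show ?thesis
    unfolding d q special_def
    using gap_multiple(2) gap_sum(2) gap_difference(2)[OF assms(1,2)] by blast
qed

end
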